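(* Let $G=(V,E)$ be a finite undirected graph with $V=\{1,\dots,p\}$. Then the following are equivalent: (i) for every symmetric positive definite $p\times p$ real matrix $A$, the thresholded matrix $A_G$ is positive definite; (ii) $G=\bigcup_{i=1}^{\tau} G_i$ for some $\tau\in\mathbb{N}$, where $G_1,\dots,G_\tau$ are pairwise disconnected complete graphs (equivalently, every connected component of $G$ is a complete graph).
   Context: For a symmetric $p\times p$ real matrix $A=(a_{ij})$ and an undirected graph $G=(V,E)$ on $V=\{1,\dots,p\}$, the matrix $A_G$ obtained by thresholding $A$ with respect to $G$ is defined by $(A_G)_{ij}=a_{ij}$ if $i=j$ or $(i,j)\in E$, and $(A_G)_{ij}=0$ otherwise. *)

theory Defs
  imports "HOL-Analysis.Analysis"
begin

text \<open>Vertices are the elements of a finite type 'n (so V has p = CARD('n) elements);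
  an undirected graph is a symmetric edge relation E on 'n.\<close>

definition sym_mat :: "real^'n^'n \<Rightarrow> bool" where
  "sym_mat A \<longleftrightarrow> transpose A = A"

definition pos_def_mat :: "real^'n^'n \<Rightarrow> bool" where
  "pos_def_mat A \<longleftrightarrow> (\<forall>x::real^'n. x \<noteq> 0 \<longrightarrow> x \<bullet> (A *v x) > 0)"

definition threshold :: "('n \<Rightarrow> 'n \<Rightarrow> bool) \<Rightarrow> real^'n^'n \<Rightarrow> real^'n^'n" where
  "threshold E A = (\<chi> i j. if i = j \<or> E i j then A $ i $ j else 0)"

definition components_complete :: "('n \<Rightarrow> 'n \<Rightarrow> bool) \<Rightarrow> bool" where
  "components_complete E \<longleftrightarrow> (\<forall>i j. E\<^sup>*\<^sup>* i j \<and> i \<noteq> j \<longrightarrow> E i j)"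

end

theory Submission
  imports Defs
begin

text \<open>If every component is complete, the reflexive closure of E is an equivalence relation and
  A_G is block diagonal up to a permutation, so its quadratic form at x is the sum over the
  components C of the quadratic forms of A at the restrictions of x to C: nonnegative terms,
  the one for a component meeting the support of x being positive.
  Otherwise some path a - b - c is induced (E a b, E b c, not E a c). The matrix
  A = I/10 + 1_S 1_S^T with S = {a, b, c} is positive definite, but thresholding kills the
  entry (a, c), and then the vector (1, -2, 1) on (a, b, c) has negative A_G-energy.\<close>

definition mask_mat :: "('n \<times> 'n) set \<Rightarrow> real^'n^'n \<Rightarrow> real^'n^'n" where
  "mask_mat P M = (\<chi> i j. if (i, j) \<in> P then M $ i $ j else 0)"

definition restrict_vec :: "'n set \<Rightarrow> real^'n \<Rightarrow> real^'n" where
  "restrict_vec C x = (\<chi> i. if i \<in> C then x $ i else 0)"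

lemma threshold_eq_mask_mat: "threshold E A = mask_mat {(i, j). i = j \<or> E i j} A"
  by (simp add: threshold_def mask_mat_def)

lemma quadratic_form_eq_double_sum:
  fixes M :: "real^'n::finite^'n"
  shows "x \<bullet> (M *v x) = (\<Sum>i\<in>UNIV. \<Sum>j\<in>UNIV. x $ i * M $ i $ j * x $ j)"
  by (simp add: inner_vec_def matrix_vector_mult_def sum_distrib_left mult.assoc)

lemma quadratic_form_eq_sum_pairs:
  fixes M :: "real^'n::finite^'n"
  shows "x \<bullet> (M *v x) = (\<Sum>(i, j)\<in>UNIV. x $ i * M $ i $ j * x $ j)"
  by (simp add: quadratic_form_eq_double_sum sum.cartesian_product)

lemma quadratic_form_supported:
  fixes M :: "real^'n::finite^'n"
  assumes "\<And>j. j \<notin> S \<Longrightarrow> x $ j = 0"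
  shows "x \<bullet> (M *v x) = (\<Sum>i\<in>S. \<Sum>j\<in>S. x $ i * M $ i $ j * x $ j)"
proof -
  have "(\<Sum>i\<in>UNIV. g i) = (\<Sum>i\<in>S. g i)" if "\<And>i. i \<notin> S \<Longrightarrow> g i = 0" for g :: "'n \<Rightarrow> real"
    by (rule sum.mono_neutral_right) (use that in auto)
  then show ?thesis
    unfolding quadratic_form_eq_double_sum by (simp add: assms)
qed

lemma quadratic_form_mask_mat:
  fixes M :: "real^'n::finite^'n"
  shows "x \<bullet> (mask_mat P M *v x) = (\<Sum>(i, j)\<in>P. x $ i * M $ i $ j * x $ j)"
proof -
  have "x \<bullet> (mask_mat P M *v x)
      = (\<Sum>ij\<in>UNIV. if ij \<in> P then (case ij of (i, j) \<Rightarrow> x $ i * M $ i $ j * x $ j) else 0)"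
    unfolding quadratic_form_eq_sum_pairs mask_mat_def by (intro sum.cong) auto
  then show ?thesis
    by (simp add: sum.If_cases)
qed

lemma quadratic_form_restrict_vec:
  fixes M :: "real^'n::finite^'n"
  shows "restrict_vec C x \<bullet> (M *v restrict_vec C x) = x \<bullet> (mask_mat (C \<times> C) M *v x)"
proof -
  have "restrict_vec C x \<bullet> (M *v restrict_vec C x)
      = (\<Sum>ij\<in>UNIV. if ij \<in> C \<times> C then (case ij of (i, j) \<Rightarrow> x $ i * M $ i $ j * x $ j) else 0)"
    unfolding quadratic_form_eq_sum_pairs restrict_vec_def by (intro sum.cong) (auto split: if_splits)
  then show ?thesis
    by (simp add: quadratic_form_mask_mat sum.If_cases)
qed

lemma Union_quotient_squares:
  assumes "equiv A R"
  shows "(\<Union>C\<in>A//R. C \<times> C) = R"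
proof (intro equalityI subsetI)
  fix p assume "p \<in> (\<Union>C\<in>A//R. C \<times> C)"
  then obtain i j C where "p = (i, j)" "C \<in> A//R" "i \<in> C" "j \<in> C" by auto
  then show "p \<in> R"
    using assms by (metis quotient_eq_iff)
next
  fix p assume "p \<in> R"
  then obtain i j where p: "p = (i, j)" "(i, j) \<in> R" by (cases p) auto
  have "i \<in> A"
    using p(2) equiv_type[OF assms] by blast
  have "i \<in> R``{i}" "j \<in> R``{i}"
    using equiv_class_self[OF assms \<open>i \<in> A\<close>] p(2) by simp_all
  then show "p \<in> (\<Union>C\<in>A//R. C \<times> C)"
    using p(1) quotientI[OF \<open>i \<in> A\<close>] by blast
qed

lemma quadratic_form_mask_equiv:
  fixes M :: "real^'n::finite^'n"
  assumes "equiv UNIV R"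
  shows "x \<bullet> (mask_mat R M *v x) = (\<Sum>C\<in>UNIV//R. restrict_vec C x \<bullet> (M *v restrict_vec C x))"
proof -
  have disjoint: "(C \<times> C) \<inter> (D \<times> D) = {}" if "C \<in> UNIV//R" "D \<in> UNIV//R" "C \<noteq> D" for C D
    using quotient_disj[OF assms that(1,2)] that(3) by blast
  have "x \<bullet> (mask_mat R M *v x) = (\<Sum>(i, j)\<in>(\<Union>C\<in>UNIV//R. C \<times> C). x $ i * M $ i $ j * x $ j)"
    by (simp add: quadratic_form_mask_mat Union_quotient_squares[OF assms])
  also have "\<dots> = (\<Sum>C\<in>UNIV//R. \<Sum>(i, j)\<in>C \<times> C. x $ i * M $ i $ j * x $ j)"
    by (rule sum.UNION_disjoint) (use disjoint in auto)
  finally show ?thesis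
    by (simp add: quadratic_form_restrict_vec quadratic_form_mask_mat)
qed

lemma pos_def_mat_imp_nonneg: "pos_def_mat A \<Longrightarrow> 0 \<le> x \<bullet> (A *v x)"
  unfolding pos_def_mat_def by (cases "x = 0") (auto intro: less_imp_le)

lemma pos_def_mat_mask_equiv:
  fixes M :: "real^'n::finite^'n"
  assumes "equiv UNIV R" and "pos_def_mat M"
  shows "pos_def_mat (mask_mat R M)"
  unfolding pos_def_mat_def
proof (intro allI impI)
  fix x :: "real^'n" assume "x \<noteq> 0"
  then obtain k where k: "x $ k \<noteq> 0"
    by (metis vec_eq_iff zero_index)
  let ?C = "R``{k}"
  have "k \<in> ?C"
    using equiv_class_self[OF assms(1)] by simp
  with k have "restrict_vec ?C x $ k \<noteq> 0"
    by (simp add: restrict_vec_def)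
  then have "restrict_vec ?C x \<noteq> 0"
    by auto
  then have "0 < restrict_vec ?C x \<bullet> (M *v restrict_vec ?C x)"
    using assms(2) unfolding pos_def_mat_def by blast
  moreover have "?C \<in> UNIV//R"
    by (rule quotientI) simp
  ultimately have "0 < (\<Sum>C\<in>UNIV//R. restrict_vec C x \<bullet> (M *v restrict_vec C x))"
    by (intro sum_pos2[of _ ?C]) (simp_all add: pos_def_mat_imp_nonneg[OF assms(2)])
  then show "0 < x \<bullet> (mask_mat R M *v x)"
    by (simp add: quadratic_form_mask_equiv[OF assms(1)])
qed

lemma equiv_reflcl_if_components_complete:
  assumes "symp E" and "components_complete E"
  shows "equiv UNIV {(i, j). i = j \<or> E i j}"
proof (rule equivI)
  show "sym {(i, j). i = j \<or> E i j}"
    using assms(1) by (auto intro: symI dest: sympD)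
  show "trans {(i, j). i = j \<or> E i j}"
  proof (rule transI)
    fix i j k assume "(i, j) \<in> {(i, j). i = j \<or> E i j}" "(j, k) \<in> {(i, j). i = j \<or> E i j}"
    then have "E\<^sup>*\<^sup>* i k"
      by (auto intro: rtranclp_trans)
    then show "(i, k) \<in> {(i, j). i = j \<or> E i j}"
      using assms(2) unfolding components_complete_def by blast
  qed
qed (auto simp: refl_on_def)

lemma induced_path_if_not_components_complete:
  assumes "\<not> components_complete E"
  obtains a b c where "a \<noteq> b" "b \<noteq> c" "a \<noteq> c" "E a b" "E b c" "\<not> E a c"
proof -
  have "i = k \<or> E i k \<or> (\<exists>a b c. a \<noteq> b \<and> b \<noteq> c \<and> a \<noteq> c \<and> E a b \<and> E b c \<and> \<not> E a c)"
    if "E\<^sup>*\<^sup>* i k" for i k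
    using that
  proof (induction rule: rtranclp_induct)
    case (step j k)
    \<comment> \<open>If i, j, k are distinct, E i j, E j k and not E i k, then (i, j, k) itself is induced.\<close>
    then show ?case by metis
  qed simp
  then show ?thesis
    using assms that unfolding components_complete_def by blast
qed

lemma pos_def_mat_scaled_identity_plus_outer:
  fixes v :: "real^'n::finite"
  assumes "0 < \<epsilon>"
  shows "pos_def_mat (\<chi> i j. (if i = j then \<epsilon> else 0) + v $ i * v $ j)"
  unfolding pos_def_mat_def
proof (intro allI impI)
  fix x :: "real^'n" assume "x \<noteq> 0"
  let ?M = "\<chi> i j. (if i = j then \<epsilon> else 0) + v $ i * v $ j"
  have "(?M *v x) $ i = \<epsilon> * x $ i + v $ i * (v \<bullet> x)" for i
  proof -
    have "(\<Sum>j\<in>UNIV. (if i = j then \<epsilon> else 0) * x $ j) = \<epsilon> * x $ i"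
      by (simp add: if_distrib[of "\<lambda>c. c * x $ _"] cong: if_cong)
    then show ?thesis
      by (simp add: matrix_vector_mult_def inner_vec_def distrib_right sum.distrib
          sum_distrib_left mult.assoc)
  qed
  then have "?M *v x = \<epsilon> *\<^sub>R x + (v \<bullet> x) *\<^sub>R v"
    by (simp add: vec_eq_iff mult.commute)
  then have "x \<bullet> (?M *v x) = \<epsilon> * (x \<bullet> x) + (v \<bullet> x)\<^sup>2"
    by (simp add: inner_add_right power2_eq_square inner_commute)
  moreover have "0 < \<epsilon> * (x \<bullet> x)"
    using assms \<open>x \<noteq> 0\<close> by simp
  ultimately show "0 < x \<bullet> (?M *v x)"
    by (simp add: add_pos_nonneg)
qed

lemma threshold_not_pos_def_on_induced_path:
  fixes E :: "'n::finite \<Rightarrow> 'n \<Rightarrow> bool"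
  assumes "symp E" and distinct: "a \<noteq> b" "b \<noteq> c" "a \<noteq> c"
    and path: "E a b" "E b c" "\<not> E a c"
  obtains A :: "real^'n^'n" where "sym_mat A" "pos_def_mat A" "\<not> pos_def_mat (threshold E A)"
proof
  define v :: "real^'n" where "v = (\<chi> i. if i \<in> {a, b, c} then 1 else 0)"
  define A :: "real^'n^'n" where "A = (\<chi> i j. (if i = j then 1/10 else 0) + v $ i * v $ j)"
  show "sym_mat A"
    unfolding sym_mat_def A_def transpose_def by (simp add: vec_eq_iff mult.commute)
  show "pos_def_mat A"
    unfolding A_def by (rule pos_def_mat_scaled_identity_plus_outer) simp
  let ?T = "threshold E A"
  have "E b a" "E c b" "\<not> E c a"
    using assms by (auto dest: sympD)
  then have diagonal: "?T $ a $ a = 11/10" "?T $ b $ b = 11/10" "?T $ c $ c = 11/10"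
    and edges: "?T $ a $ b = 1" "?T $ b $ a = 1" "?T $ b $ c = 1" "?T $ c $ b = 1"
    and non_edges: "?T $ a $ c = 0" "?T $ c $ a = 0"
    using distinct path by (simp_all add: threshold_def A_def v_def)
  define x :: "real^'n" where "x = (\<chi> i. if i = a then 1 else if i = b then -2 else if i = c then 1 else 0)"
  have x: "x $ a = 1" "x $ b = -2" "x $ c = 1" "\<And>j. j \<notin> {a, b, c} \<Longrightarrow> x $ j = 0"
    using distinct by (simp_all add: x_def)
  then have "x \<noteq> 0"
    by auto
  have "x \<bullet> (?T *v x) = -14/10"
  proof -
    have "x \<bullet> (?T *v x) = (\<Sum>i\<in>{a, b, c}. \<Sum>j\<in>{a, b, c}. x $ i * ?T $ i $ j * x $ j)"
      by (rule quadratic_form_supported) (rule x(4))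
    also have "\<dots> = -14/10"
      using distinct by (simp add: x diagonal edges non_edges)
    finally show ?thesis .
  qed
  with \<open>x \<noteq> 0\<close> show "\<not> pos_def_mat ?T"
    unfolding pos_def_mat_def by force
qed

theorem theorem3:
  fixes E :: "'n::finite \<Rightarrow> 'n \<Rightarrow> bool"
  assumes "symp E"
  shows "(\<forall>A::real^'n^'n. sym_mat A \<and> pos_def_mat A \<longrightarrow> pos_def_mat (threshold E A))
         \<longleftrightarrow> components_complete E"
proof
  assume "\<forall>A::real^'n^'n. sym_mat A \<and> pos_def_mat A \<longrightarrow> pos_def_mat (threshold E A)"
  then show "components_complete E"
    using induced_path_if_not_components_complete threshold_not_pos_def_on_induced_path[OF assms]
    by metis
next
  assume "components_complete E"
  then have "equiv UNIV {(i, j). i = j \<or> E i j}"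
    by (rule equiv_reflcl_if_components_complete[OF assms])
  then show "\<forall>A::real^'n^'n. sym_mat A \<and> pos_def_mat A \<longrightarrow> pos_def_mat (threshold E A)"
    by (simp add: threshold_eq_mask_mat pos_def_mat_mask_equiv)
qed

end
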